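(* Let $k\in\mathbb{N}$ and let $B$ be the $3k\times 2k$ matrix $B=\begin{bmatrix}2I_{2k}\\ -2\,I_k\otimes[1,1]\end{bmatrix}$. Let $A_1,A_2$ be $3k\times 2k$ real matrices such that (1) $A_1\ge0$ and $A_2\ge0$ entrywise; (2) for all $i\in[3k]$ and $j\in[k]$, $A_2(i,2j-1)=A_2(i,2j)$; (3) every row of $A_1+A_2/2$ has entry sum at most $1$. Then $B+A_1-A_2$ has rank $2k$.
   Context: $I_m$ is the $m\times m$ identity matrix; $I_k\otimes[1,1]$ is the $k\times 2k$ matrix whose $j$-th row has entries $1$ in columns $2j-1$ and $2j$ and $0$ elsewhere. *)

theory Defs
  imports "Jordan_Normal_Form.DL_Rank"
begin

text \<open>The 3k x 2k matrix B = [2 I_{2k}; -2 (I_k tensor [1,1])], 0-indexed: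
  rows i < 2k carry 2 on the diagonal; row 2k+j (j < k) carries -2 in columns 2j and 2j+1.\<close>
definition Bmat :: "nat \<Rightarrow> real mat" where
  "Bmat k = mat (3*k) (2*k) (\<lambda>(i,j).
      if i < 2*k then (if i = j then 2 else 0)
      else (if j div 2 = i - 2*k then -2 else 0))"

end

theory Submission
  imports Defs
begin

text \<open>It suffices that \<open>(B + A1 - A2) x = 0\<close> forces \<open>x = 0\<close>. Put \<open>y = B x\<close> and let \<open>Y\<close> bound
  all \<open>|y i|\<close>. The entries of \<open>y\<close> are \<open>2 x j\<close> and \<open>-2 (x (2l) + x (2l+1))\<close>, so these
  entries and pair sums of \<open>x\<close> are at most \<open>Y/2\<close> in absolute value. As \<open>A2\<close> is constant on
  column pairs, \<open>A2 x\<close> only sees the pair sums, each with twice the weight of a single column.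
  Hence every entry of \<open>y = (A2 - A1) x\<close> is bounded by \<open>(row sum of A1 + A2/2) Y/2 \<le> Y/2\<close>;
  taking \<open>Y\<close> to be the maximum gives \<open>Y = 0\<close>, and so \<open>x = 0\<close>.\<close>

lemma sum_lessThan_double:
  fixes g :: "nat \<Rightarrow> 'a::comm_monoid_add"
  shows "(\<Sum>j<2*k. g j) = (\<Sum>l<k. g (2*l) + g (2*l+1))"
  by (induction k) (simp_all add: lessThan_Suc add_ac)

lemma sum_lessThan_double_pairwise_const:
  fixes w x :: "nat \<Rightarrow> 'a::comm_semiring_1"
  assumes "\<forall>l<k. w (2*l) = w (2*l+1)"
  shows "(\<Sum>j<2*k. w j * x j) = (\<Sum>l<k. w (2*l) * (x (2*l) + x (2*l+1)))"
    and "(\<Sum>j<2*k. w j) = 2 * (\<Sum>l<k. w (2*l))"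
proof -
  show "(\<Sum>j<2*k. w j * x j) = (\<Sum>l<k. w (2*l) * (x (2*l) + x (2*l+1)))"
    unfolding sum_lessThan_double using assms by (intro sum.cong) (simp_all add: distrib_left)
  show "(\<Sum>j<2*k. w j) = 2 * (\<Sum>l<k. w (2*l))"
    unfolding sum_lessThan_double sum_distrib_left using assms by (intro sum.cong) (simp_all add: mult_2)
qed

lemma abs_weighted_sum_le:
  fixes w x :: "'a \<Rightarrow> real"
  assumes "\<forall>j\<in>S. 0 \<le> w j" and "\<forall>j\<in>S. \<bar>x j\<bar> \<le> c"
  shows "\<bar>\<Sum>j\<in>S. w j * x j\<bar> \<le> (\<Sum>j\<in>S. w j) * c"
proof -
  have "\<bar>\<Sum>j\<in>S. w j * x j\<bar> \<le> (\<Sum>j\<in>S. \<bar>w j * x j\<bar>)" by (rule sum_abs)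
  also have "\<dots> \<le> (\<Sum>j\<in>S. w j * c)"
    using assms by (intro sum_mono) (auto simp: abs_mult intro: mult_left_mono)
  finally show ?thesis by (simp add: sum_distrib_right)
qed

lemma zero_if_bound_halves:
  fixes y :: "'a \<Rightarrow> real"
  assumes "finite I" and halves: "\<And>Y. \<forall>i\<in>I. \<bar>y i\<bar> \<le> Y \<Longrightarrow> \<forall>i\<in>I. \<bar>y i\<bar> \<le> Y / 2"
  shows "\<forall>i\<in>I. y i = 0"
proof -
  define Y where "Y = Max (insert 0 ((\<lambda>i. \<bar>y i\<bar>) ` I))"
  have bound: "\<forall>i\<in>I. \<bar>y i\<bar> \<le> Y" and "0 \<le> Y"
    using \<open>finite I\<close> by (auto simp: Y_def)
  have "Y \<le> Y / 2"
    using Max_in[of "insert 0 ((\<lambda>i. \<bar>y i\<bar>) ` I)"] \<open>finite I\<close> halves[OF bound]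
    by (auto simp: Y_def[symmetric])
  then show ?thesis using bound \<open>0 \<le> Y\<close> by force
qed

lemma mult_mat_vec_nth_sum:
  assumes "A \<in> carrier_mat nr nc" and "v \<in> carrier_vec nc" and "i < nr"
  shows "(A *\<^sub>v v) $ i = (\<Sum>j<nc. A $$ (i,j) * v $ j)"
  using assms by (auto simp: scalar_prod_def lessThan_atLeast0 intro!: sum.cong)

lemma rank_eq_dim_col_if_trivial_kernel:
  fixes A :: "'a::field mat"
  assumes A: "A \<in> carrier_mat nr nc"
    and ker: "\<And>v. v \<in> carrier_vec nc \<Longrightarrow> A *\<^sub>v v = 0\<^sub>v nr \<Longrightarrow> v = 0\<^sub>v nc"
  shows "vec_space.rank nr A = nc"
proof -
  interpret V: vec_space "TYPE('a)" nr .
  have "distinct (cols A)"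
  proof (rule ccontr)
    assume "\<not> distinct (cols A)"
    then obtain a b where ab: "a < nc" "b < nc" "a \<noteq> b" "col A a = col A b"
      using A by (auto simp: distinct_conv_nth)
    define v where "v = vec nc (\<lambda>j. if j = a then 1 else if j = b then -1 else (0::'a))"
    have "A *\<^sub>v v = 0\<^sub>v nr"
    proof (rule eq_vecI)
      fix i assume "i < dim_vec (0\<^sub>v nr :: 'a vec)"
      then have i: "i < nr" by simp
      have "(A *\<^sub>v v) $ i = (\<Sum>j<nc. A $$ (i,j) * v $ j)"
        by (rule mult_mat_vec_nth_sum[OF A _ i]) (simp add: v_def)
      also have "\<dots> = (\<Sum>j<nc. (if j = a then A $$ (i,a) else 0) - (if j = b then A $$ (i,b) else 0))"
        using ab by (intro sum.cong) (auto simp: v_def)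
      also have "\<dots> = A $$ (i,a) - A $$ (i,b)"
        using ab(1,2) by (simp add: sum_subtractf)
      also have "\<dots> = 0"
        using arg_cong[OF ab(4), of "\<lambda>c. c $ i"] A i ab(1,2) by simp
      finally show "(A *\<^sub>v v) $ i = 0\<^sub>v nr $ i" using i by simp
    qed (use A in simp)
    then have "v = 0\<^sub>v nc" by (rule ker[rotated]) (simp add: v_def)
    moreover have "v $ a = 1" using ab(1) by (simp add: v_def)
    ultimately show False using ab(1) by simp
  qed
  moreover have "\<not> V.lin_dep (set (cols A))"
  proof
    assume "V.lin_dep (set (cols A))"
    then obtain v where "v \<in> carrier_vec nc" "v \<noteq> 0\<^sub>v nc" "A *\<^sub>v v = 0\<^sub>v nr"
      using V.lin_depE[OF A _ \<open>distinct (cols A)\<close>] by blast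
    then show False using ker by blast
  qed
  ultimately show ?thesis using V.lin_indpt_full_rank[OF A] by blast
qed

lemma Bmat_carrier: "Bmat k \<in> carrier_mat (3*k) (2*k)"
  by (simp add: Bmat_def)

lemma Bmat_mult_vec_nth:
  assumes "v \<in> carrier_vec (2*k)" and "i < 3*k"
  shows "(Bmat k *\<^sub>v v) $ i =
    (if i < 2*k then 2 * v $ i else -2 * (v $ (2*(i-2*k)) + v $ (2*(i-2*k)+1)))"
proof (cases "i < 2*k")
  case True
  have "(Bmat k *\<^sub>v v) $ i = (\<Sum>j<2*k. if j = i then 2 * v $ j else 0)"
    unfolding mult_mat_vec_nth_sum[OF Bmat_carrier assms]
    using True by (intro sum.cong) (auto simp: Bmat_def)
  then show ?thesis using True by simp
next
  case False
  have "(Bmat k *\<^sub>v v) $ i =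
      (\<Sum>l<k. Bmat k $$ (i, 2*l) * v $ (2*l) + Bmat k $$ (i, 2*l+1) * v $ (2*l+1))"
    unfolding mult_mat_vec_nth_sum[OF Bmat_carrier assms] by (rule sum_lessThan_double)
  also have "\<dots> = (\<Sum>l<k. if l = i - 2*k then -2 * (v $ (2*l) + v $ (2*l+1)) else 0)"
    using False assms(2) by (intro sum.cong) (auto simp: Bmat_def)
  finally have "(Bmat k *\<^sub>v v) $ i = \<dots>" .
  then show ?thesis using False assms(2) by (simp add: less_diff_conv2)
qed

lemma perturbation_row_bound:
  fixes A1 A2 :: "real mat" and v :: "real vec"
  assumes A1: "A1 \<in> carrier_mat (3*k) (2*k)" and A2: "A2 \<in> carrier_mat (3*k) (2*k)"
    and nonneg: "\<forall>i<3*k. \<forall>j<2*k. A1 $$ (i,j) \<ge> 0 \<and> A2 $$ (i,j) \<ge> 0"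
    and pairs: "\<forall>i<3*k. \<forall>j<k. A2 $$ (i, 2*j) = A2 $$ (i, 2*j+1)"
    and v: "v \<in> carrier_vec (2*k)" and i: "i < 3*k"
    and entry: "\<forall>j<2*k. \<bar>v $ j\<bar> \<le> c"
    and pair: "\<forall>l<k. \<bar>v $ (2*l) + v $ (2*l+1)\<bar> \<le> c"
  shows "\<bar>(A2 *\<^sub>v v) $ i - (A1 *\<^sub>v v) $ i\<bar> \<le> (\<Sum>j<2*k. A1 $$ (i,j) + A2 $$ (i,j) / 2) * c"
proof -
  have "\<bar>(A1 *\<^sub>v v) $ i\<bar> \<le> (\<Sum>j<2*k. A1 $$ (i,j)) * c"
    unfolding mult_mat_vec_nth_sum[OF A1 v i]
    using nonneg i entry by (intro abs_weighted_sum_le) auto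
  moreover have "\<bar>(A2 *\<^sub>v v) $ i\<bar> \<le> (\<Sum>j<2*k. A2 $$ (i,j) / 2) * c"
  proof -
    have "\<bar>(A2 *\<^sub>v v) $ i\<bar> = \<bar>\<Sum>l<k. A2 $$ (i, 2*l) * (v $ (2*l) + v $ (2*l+1))\<bar>"
      unfolding mult_mat_vec_nth_sum[OF A2 v i]
      using pairs i by (subst sum_lessThan_double_pairwise_const(1)) auto
    also have "\<dots> \<le> (\<Sum>l<k. A2 $$ (i, 2*l)) * c"
      using nonneg i pair by (intro abs_weighted_sum_le) auto
    also have "(\<Sum>l<k. A2 $$ (i, 2*l)) = (\<Sum>j<2*k. A2 $$ (i,j) / 2)"
      using sum_lessThan_double_pairwise_const(2)[of k "\<lambda>j. A2 $$ (i,j)"] pairs i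
      by (simp add: sum_divide_distrib[symmetric])
    finally show ?thesis .
  qed
  ultimately show ?thesis
    unfolding sum.distrib distrib_right by linarith
qed

lemma Bmat_perturbation_kernel_trivial:
  fixes A1 A2 :: "real mat" and v :: "real vec"
  assumes A1: "A1 \<in> carrier_mat (3*k) (2*k)" and A2: "A2 \<in> carrier_mat (3*k) (2*k)"
    and nonneg: "\<forall>i<3*k. \<forall>j<2*k. A1 $$ (i,j) \<ge> 0 \<and> A2 $$ (i,j) \<ge> 0"
    and pairs: "\<forall>i<3*k. \<forall>j<k. A2 $$ (i, 2*j) = A2 $$ (i, 2*j+1)"
    and row_sums: "\<forall>i<3*k. (\<Sum>j<2*k. A1 $$ (i,j) + A2 $$ (i,j) / 2) \<le> 1"
    and v: "v \<in> carrier_vec (2*k)" and kernel: "(Bmat k + A1 - A2) *\<^sub>v v = 0\<^sub>v (3*k)"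
  shows "v = 0\<^sub>v (2*k)"
proof -
  define y where "y i = (Bmat k *\<^sub>v v) $ i" for i
  have y_eq: "y i = (A2 *\<^sub>v v) $ i - (A1 *\<^sub>v v) $ i" if "i < 3*k" for i
  proof -
    have "(Bmat k + A1 - A2) *\<^sub>v v = Bmat k *\<^sub>v v + A1 *\<^sub>v v - A2 *\<^sub>v v"
      by (simp add: minus_mult_distrib_mat_vec[OF add_carrier_mat[OF A1] A2 v]
          add_mult_distrib_mat_vec[OF Bmat_carrier A1 v])
    then show ?thesis
      using arg_cong[OF kernel, of "\<lambda>w. w $ i"] that A1 A2 by (simp add: y_def)
  qed
  have y_zero: "\<forall>i\<in>{..<3*k}. y i = 0"
  proof (rule zero_if_bound_halves)
    fix Y assume bound: "\<forall>i\<in>{..<3*k}. \<bar>y i\<bar> \<le> Y"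
    have entry: "\<forall>j<2*k. \<bar>v $ j\<bar> \<le> Y / 2"
    proof (intro allI impI)
      fix j assume "j < 2*k"
      then show "\<bar>v $ j\<bar> \<le> Y / 2"
        using bound[rule_format, of j] Bmat_mult_vec_nth[OF v, of j] by (simp add: y_def abs_mult)
    qed
    have pair: "\<forall>l<k. \<bar>v $ (2*l) + v $ (2*l+1)\<bar> \<le> Y / 2"
    proof (intro allI impI)
      fix l assume "l < k"
      then show "\<bar>v $ (2*l) + v $ (2*l+1)\<bar> \<le> Y / 2"
        using bound[rule_format, of "2*k+l"] Bmat_mult_vec_nth[OF v, of "2*k+l"]
        by (auto simp: y_def abs_if split: if_splits)
    qed
    show "\<forall>i\<in>{..<3*k}. \<bar>y i\<bar> \<le> Y / 2"
    proof
      fix i assume "i \<in> {..<3*k}"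
      then have i: "i < 3*k" by simp
      have "\<bar>y i\<bar> \<le> (\<Sum>j<2*k. A1 $$ (i,j) + A2 $$ (i,j) / 2) * (Y / 2)"
        unfolding y_eq[OF i] by (rule perturbation_row_bound[OF A1 A2 nonneg pairs v i entry pair])
      also have "\<dots> \<le> 1 * (Y / 2)"
        using row_sums i bound by (intro mult_right_mono) auto
      finally show "\<bar>y i\<bar> \<le> Y / 2" by simp
    qed
  qed simp
  show ?thesis
  proof (rule eq_vecI)
    fix j assume "j < dim_vec (0\<^sub>v (2*k) :: real vec)"
    then have j: "j < 2*k" by simp
    have "2 * v $ j = 0"
      using y_zero j Bmat_mult_vec_nth[OF v, of j] by (simp add: y_def)
    then show "v $ j = 0\<^sub>v (2*k) $ j" using j by simp
  qed (use v in simp)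
qed

theorem lemma17:
  fixes k :: nat and A1 A2 :: "real mat"
  assumes "A1 \<in> carrier_mat (3*k) (2*k)" and "A2 \<in> carrier_mat (3*k) (2*k)"
    and "\<forall>i<3*k. \<forall>j<2*k. A1 $$ (i,j) \<ge> 0 \<and> A2 $$ (i,j) \<ge> 0"
    and "\<forall>i<3*k. \<forall>j<k. A2 $$ (i, 2*j) = A2 $$ (i, 2*j+1)"
    and "\<forall>i<3*k. (\<Sum>j<2*k. A1 $$ (i,j) + A2 $$ (i,j) / 2) \<le> 1"
  shows "vec_space.rank (3*k) (Bmat k + A1 - A2) = 2*k"
proof (rule rank_eq_dim_col_if_trivial_kernel)
  show "Bmat k + A1 - A2 \<in> carrier_mat (3*k) (2*k)"
    using Bmat_carrier[of k] assms(1,2) by (intro minus_carrier_mat add_carrier_mat)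
qed (use Bmat_perturbation_kernel_trivial[OF assms] in blast)

end
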